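(* Let $n\ge2$, $z_{ij}\in\mathbb{C}$ with $|z_{ij}|=1$ for $1\le i<j\le n$, $z_{ji}=\overline{z_{ij}}$, and let $W^{(\mathbf z)}=\frac1n\sum_{i,j}e_{ij}\otimes R_n^{(\mathbf z)}(e_{ij})$. Let $\lambda_{\min}^{(\mathbf z)}<0$ be the smallest eigenvalue of $W^{(\mathbf z)}$ and $p_*=\frac{1}{1+n^2|\lambda_{\min}^{(\mathbf z)}|}$. Then the operator $\widetilde W^{(\mathbf z)}(p_* )=\frac{1-p_*}{n^2}\mathbb{I}_n\otimes\mathbb{I}_n+p_*W^{(\mathbf z)}$ is a separable state; equivalently the completely positive map $(1-p_* )\frac{1}{n}\mathbb{I}_n\operatorname{Tr}(\cdot)+p_*R_n^{(\mathbf z)}$ (the structural physical approximation of $R_n^{(\mathbf z)}$) is entanglement breaking.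
   Context: $e_{ij}=|e_i\rangle\langle e_j|$ for the standard basis of $\mathbb{C}^n$. $R_n^{(\mathbf z)}:M_n(\mathbb{C})\to M_n(\mathbb{C})$ is the linear map with $R_n^{(\mathbf z)}(e_{ii})=\frac{1}{n-1}(\mathbb{I}_n-e_{ii})$ and $R_n^{(\mathbf z)}(e_{ij})=-\frac{z_{ij}}{n-1}e_{ij}$ for $i\ne j$; it is unital and $\operatorname{Tr}W^{(\mathbf z)}=1$. For a Hermitian $W$ with trace one, $\widetilde W(p)=\frac{1-p}{n^2}\mathbb{I}\otimes\mathbb{I}+pW$ and $p_*$ is the largest $p$ with $\widetilde W(p)\ge0$ (which equals the value given). A state is separable if it is a convex combination of product states; a completely positive map $\Lambda$ is entanglement breaking if $(\mathrm{id}_n\otimes\Lambda)\rho$ is separable for every state $\rho$ on $\mathbb{C}^n\otimes\mathbb{C}^n$, equivalently iff its normalized Choi matrix is separable. *)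

theory Defs
  imports "Jordan_Normal_Form.Matrix" "Jordan_Normal_Form.Char_Poly"
begin

text \<open>Matrix unit e_ij = |e_i><e_j| in M_n(C) (indices 0..n-1).\<close>
definition eunit :: "nat \<Rightarrow> nat \<Rightarrow> nat \<Rightarrow> complex mat" where
  "eunit n i j = mat n n (\<lambda>(a,b). if a = i \<and> b = j then 1 else 0)"

text \<open>Kronecker (tensor) product; basis e_a (x) e_b of C^p (x) C^q is index a*q+b.\<close>
definition kron :: "complex mat \<Rightarrow> complex mat \<Rightarrow> complex mat" where
  "kron A B = mat (dim_row A * dim_row B) (dim_col A * dim_col B)
     (\<lambda>(r,c). A $$ (r div dim_row B, c div dim_col B) * B $$ (r mod dim_row B, c mod dim_col B))"

definition R_basis :: "nat \<Rightarrow> (nat \<Rightarrow> nat \<Rightarrow> complex) \<Rightarrow> nat \<Rightarrow> nat \<Rightarrow> complex mat" where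
  "R_basis n z i j =
     (if i = j then (1 / (of_nat n - 1)) \<cdot>\<^sub>m (1\<^sub>m n - eunit n i i)
      else (- z i j / (of_nat n - 1)) \<cdot>\<^sub>m eunit n i j)"

definition R_map :: "nat \<Rightarrow> (nat \<Rightarrow> nat \<Rightarrow> complex) \<Rightarrow> complex mat \<Rightarrow> complex mat" where
  "R_map n z A = mat n n (\<lambda>(a,b). \<Sum>i<n. \<Sum>j<n. A $$ (i,j) * R_basis n z i j $$ (a,b))"

definition W_mat :: "nat \<Rightarrow> (nat \<Rightarrow> nat \<Rightarrow> complex) \<Rightarrow> complex mat" where
  "W_mat n z = mat (n*n) (n*n)
     (\<lambda>(r,c). (1 / of_nat n) * (\<Sum>i<n. \<Sum>j<n. kron (eunit n i j) (R_map n z (eunit n i j)) $$ (r,c)))"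

definition W_tilde :: "nat \<Rightarrow> (nat \<Rightarrow> nat \<Rightarrow> complex) \<Rightarrow> real \<Rightarrow> complex mat" where
  "W_tilde n z p = (complex_of_real ((1 - p) / (real n)^2)) \<cdot>\<^sub>m kron (1\<^sub>m n) (1\<^sub>m n)
                   + (complex_of_real p) \<cdot>\<^sub>m W_mat n z"

definition psd :: "nat \<Rightarrow> complex mat \<Rightarrow> bool" where
  "psd d A \<longleftrightarrow> A \<in> carrier_mat d d \<and>
     (\<forall>v :: nat \<Rightarrow> complex.
        let q = (\<Sum>a<d. \<Sum>b<d. cnj (v a) * A $$ (a,b) * v b) in Im q = 0 \<and> Re q \<ge> 0)"

definition is_state :: "nat \<Rightarrow> complex mat \<Rightarrow> bool" where
  "is_state d \<rho> \<longleftrightarrow> psd d \<rho> \<and> (\<Sum>a<d. \<rho> $$ (a,a)) = 1"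

definition separable :: "nat \<Rightarrow> complex mat \<Rightarrow> bool" where
  "separable n \<rho> \<longleftrightarrow>
     (\<exists>(m::nat) (w::nat \<Rightarrow> real) (A::nat \<Rightarrow> complex mat) (B::nat \<Rightarrow> complex mat).
        (\<forall>k<m. w k \<ge> 0) \<and> (\<Sum>k<m. w k) = 1 \<and>
        (\<forall>k<m. is_state n (A k) \<and> is_state n (B k)) \<and>
        \<rho> = mat (n*n) (n*n) (\<lambda>(r,c). \<Sum>k<m. complex_of_real (w k) * kron (A k) (B k) $$ (r,c)))"

end

theory Submission
  imports Defs "Jordan_Normal_Form.Schur_Decomposition"
begin

(* Put d = (1-p)/n^2 and c = p/(n(n-1)).  Reading off the entries of W~(p) in the
   product basis |ab> shows
      W~(p) = T(H) + c * sum_{a<>b} |ab><ab|,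
      T(H) = sum_{a,a'} H_{aa'} |aa><a'a'| + sum_{a<>b} H_{aa} |ab><ab|,
   where H = d*I - c*Z is Hermitian (Z is z with zero diagonal).  On the diagonal vectors
   sum_a u_a |aa> the matrix W acts as -Z/(n(n-1)), so every eigenvalue of H has the form
   d + p*mu with mu an eigenvalue of W; the choice p = p_star makes all of them nonnegative.
   Writing H = sum_q l_q u_q u_q^H by the spectral theorem, T(H) is an average of the product
   states |u_q w_t><u_q w_t| (x) |conj w_t><conj w_t|/n over the phase vectors
   w_t = (exp(2 pi i t 4^a / 4^n))_a, t < 4^n: averaging w_t(a) conj w_t(a') conj w_t(b) w_t(b')
   over t keeps exactly the index patterns (a=a', b=b') and (a=b, a'=b'), because
   4^a + 4^b' = 4^a' + 4^b forces {a,b'} = {a',b}.  Only the lower bound lam on the spectrum of W enters the argument. *)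

section \<open>Hermitian matrices and the spectral theorem\<close>

text \<open>Vectors of \<open>\<complex>\<^sup>n\<close> are represented by functions \<open>nat \<Rightarrow> complex\<close> of which only the
  first \<open>n\<close> values matter.\<close>

definition is_hermitian :: "nat \<Rightarrow> complex mat \<Rightarrow> bool" where
  "is_hermitian n H \<longleftrightarrow> H \<in> carrier_mat n n \<and> (\<forall>a<n. \<forall>b<n. H $$ (a,b) = cnj (H $$ (b,a)))"

lemma is_hermitianD: "is_hermitian n K \<Longrightarrow> a < n \<Longrightarrow> b < n \<Longrightarrow> cnj (K $$ (b,a)) = K $$ (a,b)"
  unfolding is_hermitian_def by (metis complex_cnj_cnj)

definition trace_n :: "nat \<Rightarrow> complex mat \<Rightarrow> complex" where
  "trace_n n X = (\<Sum>i<n. X $$ (i,i))"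

lemma trace_n_mult: "X \<in> carrier_mat n n \<Longrightarrow> Y \<in> carrier_mat n n \<Longrightarrow>
   trace_n n (X * Y) = (\<Sum>i<n. \<Sum>k<n. X $$ (i,k) * Y $$ (k,i))"
  unfolding trace_n_def by (intro sum.cong refl) (auto simp: scalar_prod_def lessThan_atLeast0)

lemma trace_n_comm:
  assumes "X \<in> carrier_mat n n" "Y \<in> carrier_mat n n"
  shows "trace_n n (X * Y) = trace_n n (Y * X)"
  unfolding trace_n_mult[OF assms] trace_n_mult[OF assms(2,1)]
  by (subst sum.swap) (simp add: mult.commute)

lemma trace_square_hermitian:
  assumes K: "is_hermitian n K"
  shows "trace_n n (K * K) = of_real (\<Sum>i<n. \<Sum>k<n. (cmod (K $$ (i,k)))\<^sup>2)"
proof -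
  have Kc: "K \<in> carrier_mat n n" using K unfolding is_hermitian_def by simp
  have "trace_n n (K * K) = (\<Sum>i<n. \<Sum>k<n. of_real ((cmod (K $$ (i,k)))\<^sup>2))"
    unfolding trace_n_mult[OF Kc Kc]
  proof (intro sum.cong refl)
    fix i k assume "i \<in> {..<n}" "k \<in> {..<n}"
    hence "K $$ (k,i) = cnj (K $$ (i,k))" using is_hermitianD[OF K, of k i] by simp
    thus "K $$ (i,k) * K $$ (k,i) = of_real ((cmod (K $$ (i,k)))\<^sup>2)"
      using complex_norm_square[of "K $$ (i,k)"] by simp
  qed
  thus ?thesis by (simp only: of_real_sum)
qed

text \<open>A matrix whose only eigenvalue is 0 has \<open>tr(K\<^sup>2) = 0\<close>: by the Schur decomposition it is
  similar to a strictly upper triangular matrix.\<close>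
lemma trace_square_zero_spectrum:
  assumes Kc: "K \<in> carrier_mat n n" and ev0: "\<And>e. eigenvalue K e \<Longrightarrow> e = 0"
  shows "trace_n n (K * K) = 0"
proof -
  obtain es where cp: "char_poly K = (\<Prod>a \<leftarrow> es. [:- a, 1:])" and les: "length es = n"
    using char_poly_factorized[OF Kc] by blast
  have es0: "x = 0" if "x \<in> set es" for x
  proof -
    have "poly (char_poly K) x = 0" unfolding cp poly_prod_list
      using that by (auto simp: prod_list_zero_iff)
    thus ?thesis using ev0 eigenvalue_root_char_poly[OF Kc] by blast
  qed
  obtain B P Q where sd: "schur_decomposition K es = (B,P,Q)" by (metis prod_cases3)
  from schur_decomposition[OF Kc cp sd]
  have sim: "similar_mat_wit K B P Q" and ut: "upper_triangular B" and dg: "diag_mat B = es"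
    by auto
  have dK: "dim_row K = n" using Kc by simp
  from sim have Bc: "B \<in> carrier_mat n n" and Pc: "P \<in> carrier_mat n n"
    and Qc: "Q \<in> carrier_mat n n" and QP: "Q * P = 1\<^sub>m n" and KPBQ: "K = P * B * Q"
    unfolding similar_mat_wit_def Let_def dK by auto
  have Bdiag: "B $$ (i,i) = 0" if "i < n" for i
  proof -
    have "B $$ (i,i) = diag_mat B ! i" unfolding diag_mat_def using Bc that by simp
    also have "\<dots> \<in> set es" unfolding dg using les that by simp
    finally show ?thesis using es0 by blast
  qed
  have trB: "trace_n n (B * B) = 0"
    unfolding trace_n_mult[OF Bc Bc]
  proof (intro sum.neutral ballI)
    fix i k assume "i \<in> {..<n}" "k \<in> {..<n}"
    thus "B $$ (i,k) * B $$ (k,i) = 0"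
      using ut Bc Bdiag by (cases "k < i"; cases "i < k") (auto simp: upper_triangular_def)
  qed
  have QPX: "Q * (P * X) = X" if "X \<in> carrier_mat n n" for X
    using that Qc Pc QP by (metis assoc_mult_mat left_mult_one_mat)
  have "K * K = P * (B * (B * Q))"
    unfolding KPBQ using Bc Pc Qc by (simp add: assoc_mult_mat[of _ n n _ n _ n] QPX)
  hence "trace_n n (K * K) = trace_n n (P * (B * (B * Q)))" by simp
  also have "\<dots> = trace_n n ((B * (B * Q)) * P)" using Pc Bc Qc by (intro trace_n_comm) auto
  also have "\<dots> = trace_n n (B * B)"
    using Pc Bc Qc QP by (simp add: assoc_mult_mat[of _ n n _ n _ n])
  finally show ?thesis using trB by simp
qed

lemma hermitian_nonzero_eigenvalue:
  assumes K: "is_hermitian n K" and nz: "a < n" "b < n" "K $$ (a,b) \<noteq> 0"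
  shows "\<exists>e v. eigenvector K v e \<and> e \<noteq> 0"
proof (rule ccontr)
  assume "\<not> ?thesis"
  hence "\<And>e. eigenvalue K e \<Longrightarrow> e = 0" unfolding eigenvalue_def by blast
  with K have "trace_n n (K * K) = 0"
    by (intro trace_square_zero_spectrum) (auto simp: is_hermitian_def)
  hence "(\<Sum>i<n. \<Sum>k<n. (cmod (K $$ (i,k)))\<^sup>2) = 0"
    unfolding trace_square_hermitian[OF K] by (simp only: of_real_eq_0_iff)
  hence "(\<Sum>k<n. (cmod (K $$ (a,k)))\<^sup>2) = 0" using nz(1)
    by (subst (asm) sum_nonneg_eq_0_iff) (auto intro!: sum_nonneg)
  hence "(cmod (K $$ (a,b)))\<^sup>2 = 0" using nz(2)
    by (subst (asm) sum_nonneg_eq_0_iff) auto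
  thus False using nz(3) by simp
qed

definition cinner :: "nat \<Rightarrow> (nat \<Rightarrow> complex) \<Rightarrow> (nat \<Rightarrow> complex) \<Rightarrow> complex" where
  "cinner n u v = (\<Sum>a<n. cnj (u a) * v a)"

definition matvec :: "nat \<Rightarrow> complex mat \<Rightarrow> (nat \<Rightarrow> complex) \<Rightarrow> nat \<Rightarrow> complex" where
  "matvec n H u a = (\<Sum>b<n. H $$ (a,b) * u b)"

definition is_eigvec :: "nat \<Rightarrow> complex mat \<Rightarrow> real \<Rightarrow> (nat \<Rightarrow> complex) \<Rightarrow> bool" where
  "is_eigvec n H l u \<longleftrightarrow> (\<forall>a<n. matvec n H u a = of_real l * u a)"

definition eigensystem :: "nat \<Rightarrow> complex mat \<Rightarrow> (real \<times> (nat \<Rightarrow> complex)) list \<Rightarrow> bool" where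
  "eigensystem n H L \<longleftrightarrow> (\<forall>q<length L. is_eigvec n H (fst (L!q)) (snd (L!q))) \<and>
     (\<forall>q<length L. \<forall>r<length L. cinner n (snd (L!q)) (snd (L!r)) = (if q = r then 1 else 0))"

definition residual :: "nat \<Rightarrow> complex mat \<Rightarrow> (real \<times> (nat \<Rightarrow> complex)) list \<Rightarrow> complex mat" where
  "residual n H L = mat n n (\<lambda>(a,b). H $$ (a,b) -
     (\<Sum>q<length L. of_real (fst (L!q)) * snd (L!q) a * cnj (snd (L!q) b)))"

lemma cinner_cong:
  "(\<And>a. a < n \<Longrightarrow> f a = g a) \<Longrightarrow> (\<And>a. a < n \<Longrightarrow> h a = k a) \<Longrightarrow> cinner n f h = cinner n g k"
  unfolding cinner_def by (intro sum.cong) auto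

lemma cinner_scale_r: "cinner n u (\<lambda>a. c * w a) = c * cinner n u w"
  unfolding cinner_def by (simp add: sum_distrib_left mult.left_commute)

lemma cinner_scale_l: "cinner n (\<lambda>a. c * u a) w = cnj c * cinner n u w"
  unfolding cinner_def by (simp add: sum_distrib_left mult.assoc)

lemma cinner_cnj: "cnj (cinner n u w) = cinner n w u"
  unfolding cinner_def by (simp add: mult.commute)

lemma cinner_self: "cinner n u u = of_real (\<Sum>a<n. (cmod (u a))\<^sup>2)"
  unfolding cinner_def of_real_sum
  by (intro sum.cong refl) (metis complex_norm_square mult.commute of_real_power)

lemma cinner_sum_l:
  "cinner n (\<lambda>a. \<Sum>q\<in>S. c q * u q a) w = (\<Sum>q\<in>S. cnj (c q) * cinner n (u q) w)"
  unfolding cinner_def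
  by (simp add: sum_distrib_left sum_distrib_right cnj_sum mult.assoc sum.swap[of _ S])

lemma cinner_sum_r:
  "cinner n w (\<lambda>a. \<Sum>q\<in>S. c q * u q a) = (\<Sum>q\<in>S. c q * cinner n w (u q))"
  unfolding cinner_def by (simp add: sum_distrib_left mult.left_commute sum.swap[of _ S])

lemma cinner_diff_l: "cinner n (\<lambda>a. f a - g a) w = cinner n f w - cinner n g w"
  unfolding cinner_def by (simp add: left_diff_distrib sum_subtractf)

lemma cinner_diff_r: "cinner n w (\<lambda>a. f a - g a) = cinner n w f - cinner n w g"
  unfolding cinner_def by (simp add: right_diff_distrib sum_subtractf)

lemma cinner_delta_l: "i < n \<Longrightarrow> cinner n (\<lambda>a. if a = i then 1 else 0) w = w i"
  unfolding cinner_def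
  by (subst sum.cong[OF refl, of _ _ "\<lambda>a. if a = i then w a else 0"]) auto

lemma cinner_delta_r: "i < n \<Longrightarrow> cinner n w (\<lambda>a. if a = i then 1 else 0) = cnj (w i)"
  unfolding cinner_def
  by (subst sum.cong[OF refl, of _ _ "\<lambda>a. if a = i then cnj (w a) else 0"]) auto

lemma matvec_scale: "matvec n H (\<lambda>a. c * w a) a = c * matvec n H w a"
  unfolding matvec_def by (simp add: sum_distrib_left mult.left_commute)

lemma hermitian_cinner_sym:
  assumes "is_hermitian n K"
  shows "cinner n u (matvec n K w) = cinner n (matvec n K u) w"
proof -
  have "cinner n u (matvec n K w) = (\<Sum>a<n. \<Sum>b<n. cnj (u a) * K $$ (a,b) * w b)"
    unfolding cinner_def matvec_def by (simp add: sum_distrib_left mult.assoc)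
  also have "\<dots> = (\<Sum>b<n. \<Sum>a<n. cnj (u a) * K $$ (a,b) * w b)" by (rule sum.swap)
  also have "\<dots> = (\<Sum>b<n. \<Sum>a<n. cnj (K $$ (b,a) * u a) * w b)"
    by (intro sum.cong refl) (simp add: is_hermitianD[OF assms])
  also have "\<dots> = cinner n (matvec n K u) w"
    unfolding cinner_def matvec_def by (simp add: sum_distrib_right)
  finally show ?thesis .
qed

lemma norm_sq_pos:
  fixes w :: "nat \<Rightarrow> complex"
  assumes "a0 < n" "w a0 \<noteq> 0"
  shows "(\<Sum>a<n. (cmod (w a))\<^sup>2) > 0"
proof -
  have "(cmod (w a0))\<^sup>2 \<le> (\<Sum>a<n. (cmod (w a))\<^sup>2)" by (rule member_le_sum) (use assms in auto)
  moreover have "(cmod (w a0))\<^sup>2 > 0" using assms by simp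
  ultimately show ?thesis by linarith
qed

lemma hermitian_eigenvalue_real:
  assumes K: "is_hermitian n K" and Kw: "\<And>a. a < n \<Longrightarrow> matvec n K w a = e * w a"
    and nz: "a0 < n" "w a0 \<noteq> 0"
  shows "e = of_real (Re e)"
proof -
  define s where "s = (\<Sum>a<n. (cmod (w a))\<^sup>2)"
  have s_pos: "s > 0" unfolding s_def using nz by (rule norm_sq_pos)
  have ww: "cinner n w w = of_real s" unfolding s_def by (rule cinner_self)
  have "cinner n w (matvec n K w) = e * of_real s"
    using ww by (simp add: cinner_scale_r cinner_cong[OF _ Kw])
  moreover have "cinner n (matvec n K w) w = cnj e * of_real s"
    using ww by (simp add: cinner_scale_l cinner_cong[OF Kw])
  ultimately have "e * of_real s = cnj e * of_real s"
    using hermitian_cinner_sym[OF K, of w w] by metis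
  hence ecnj: "cnj e = e" using s_pos by simp
  have "Im e = 0" using arg_cong[OF ecnj, of Im] by simp
  thus ?thesis by (simp add: complex_eq_iff)
qed

lemma matvec_residual:
  assumes "a < n"
  shows "matvec n H w a = matvec n (residual n H L) w a
     + (\<Sum>r<length L. of_real (fst (L!r)) * snd (L!r) a * cinner n (snd (L!r)) w)"
proof -
  have "matvec n (residual n H L) w a = (\<Sum>b<n. (H $$ (a,b) -
      (\<Sum>q<length L. of_real (fst (L!q)) * snd (L!q) a * cnj (snd (L!q) b))) * w b)"
    unfolding matvec_def residual_def using assms by (intro sum.cong refl) simp
  also have "\<dots> = matvec n H w a -
      (\<Sum>b<n. \<Sum>q<length L. of_real (fst (L!q)) * snd (L!q) a * cnj (snd (L!q) b) * w b)"
    unfolding matvec_def by (simp add: left_diff_distrib sum_subtractf sum_distrib_right)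
  also have "(\<Sum>b<n. \<Sum>q<length L. of_real (fst (L!q)) * snd (L!q) a * cnj (snd (L!q) b) * w b)
     = (\<Sum>q<length L. of_real (fst (L!q)) * snd (L!q) a * cinner n (snd (L!q)) w)"
    by (subst sum.swap) (simp add: cinner_def sum_distrib_left mult.assoc)
  finally show ?thesis by (simp add: algebra_simps)
qed

lemma residual_hermitian: assumes "is_hermitian n H" shows "is_hermitian n (residual n H L)"
  unfolding is_hermitian_def
proof (intro conjI allI impI)
  show "residual n H L \<in> carrier_mat n n" unfolding residual_def by simp
  fix a b assume ab: "a < n" "b < n"
  have "cnj (residual n H L $$ (b,a)) = cnj (H $$ (b,a)) -
      (\<Sum>q<length L. of_real (fst (L!q)) * cnj (snd (L!q) b) * snd (L!q) a)"
    unfolding residual_def using ab by simp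
  also have "\<dots> = residual n H L $$ (a,b)"
    unfolding residual_def using ab is_hermitianD[OF assms ab]
    by (simp add: mult.commute mult.left_commute)
  finally show "residual n H L $$ (a,b) = cnj (residual n H L $$ (b,a))" by simp
qed

lemma residual_annihilates:
  assumes "eigensystem n H L" "q < length L" "a < n"
  shows "matvec n (residual n H L) (snd (L!q)) a = 0"
proof -
  have "(\<Sum>r<length L. of_real (fst (L!r)) * snd (L!r) a * cinner n (snd (L!r)) (snd (L!q)))
     = (\<Sum>r<length L. if r = q then of_real (fst (L!r)) * snd (L!r) a else 0)"
    using assms(1,2) unfolding eigensystem_def by (intro sum.cong refl) auto
  also have "\<dots> = of_real (fst (L!q)) * snd (L!q) a" using assms(2) by simp
  finally have s: "(\<Sum>r<length L. of_real (fst (L!r)) * snd (L!r) a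
      * cinner n (snd (L!r)) (snd (L!q))) = of_real (fst (L!q)) * snd (L!q) a" .
  have "matvec n H (snd (L!q)) a = of_real (fst (L!q)) * snd (L!q) a"
    using assms unfolding eigensystem_def is_eigvec_def by auto
  with matvec_residual[OF assms(3), of H "snd (L!q)" L] s show ?thesis by simp
qed

lemma eigensystem_unit:
  assumes "eigensystem n H L" "q < length L"
  shows "(\<Sum>a<n. (cmod (snd (L!q) a))\<^sup>2) = 1"
proof -
  have "cinner n (snd (L!q)) (snd (L!q)) = 1" using assms unfolding eigensystem_def by auto
  thus ?thesis unfolding cinner_self by (metis of_real_eq_1_iff)
qed

lemma eigensystem_nonzero:
  assumes "eigensystem n H L" "q < length L"
  obtains a0 where "a0 < n" "snd (L!q) a0 \<noteq> 0"
proof -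
  have "\<exists>a0<n. snd (L!q) a0 \<noteq> 0"
  proof (rule ccontr)
    assume "\<not> (\<exists>a0<n. snd (L!q) a0 \<noteq> 0)"
    hence "(\<Sum>a<n. (cmod (snd (L!q) a))\<^sup>2) = 0" by (intro sum.neutral) auto
    with eigensystem_unit[OF assms] show False by simp
  qed
  thus thesis using that by blast
qed

lemma bessel:
  assumes I: "eigensystem n H L" and i: "i < n"
  shows "(\<Sum>q<length L. (cmod (snd (L!q) i))\<^sup>2) \<le> 1"
proof -
  define u where "u = (\<lambda>q. snd (L!q))"
  define s where "s = (\<Sum>q<length L. (cmod (u q i))\<^sup>2)"
  define y where "y = (\<lambda>a. \<Sum>q<length L. cnj (u q i) * u q a)"
  define d where "d = (\<lambda>a. (if a = i then 1 else 0) - y a)"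
  have orth: "\<And>q r. q < length L \<Longrightarrow> r < length L \<Longrightarrow> cinner n (u q) (u r) = (if q = r then 1 else 0)"
    using I unfolding eigensystem_def u_def by auto
  have yi: "y i = of_real s" unfolding y_def s_def of_real_sum
    by (intro sum.cong refl) (metis complex_norm_square mult.commute of_real_power)
  have uy: "cinner n (u q) y = cnj (u q i)" if q: "q < length L" for q
  proof -
    have "cinner n (u q) y = (\<Sum>r<length L. cnj (u r i) * cinner n (u q) (u r))"
      unfolding y_def by (rule cinner_sum_r)
    also have "\<dots> = (\<Sum>r<length L. if r = q then cnj (u r i) else 0)"
      using q orth by (intro sum.cong refl) auto
    finally show ?thesis using q by simp
  qed
  have "cinner n y y = (\<Sum>q<length L. cnj (cnj (u q i)) * cinner n (u q) y)"
    unfolding y_def by (rule cinner_sum_l)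
  also have "\<dots> = (\<Sum>q<length L. cnj (u q i) * u q i)"
    using uy by (intro sum.cong refl) (simp add: mult.commute)
  also have "\<dots> = y i" unfolding y_def ..
  finally have yy: "cinner n y y = of_real s" using yi by simp
  have "cinner n d d = cinner n (\<lambda>a. if a = i then 1 else 0) d - cinner n y d"
    unfolding d_def by (rule cinner_diff_l)
  also have "\<dots> = (1 - y i) - (cnj (y i) - cinner n y y)"
    unfolding d_def cinner_diff_r cinner_delta_l[OF i] cinner_delta_r[OF i] by simp
  finally have "cinner n d d = of_real (1 - s)" using yi yy by simp
  hence "1 - s = (\<Sum>a<n. (cmod (d a))\<^sup>2)" unfolding cinner_self by (metis of_real_eq_iff)
  moreover have "(\<Sum>a<n. (cmod (d a))\<^sup>2) \<ge> 0" by (intro sum_nonneg) auto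
  ultimately show ?thesis unfolding s_def u_def by simp
qed

lemma eigensystem_length:
  assumes I: "eigensystem n H L"
  shows "length L \<le> n"
proof -
  have "real (length L) = (\<Sum>q<length L. \<Sum>a<n. (cmod (snd (L!q) a))\<^sup>2)"
    using eigensystem_unit[OF I] by simp
  also have "\<dots> = (\<Sum>a<n. \<Sum>q<length L. (cmod (snd (L!q) a))\<^sup>2)" by (rule sum.swap)
  also have "\<dots> \<le> (\<Sum>a<n. 1)" by (intro sum_mono bessel[OF I]) auto
  finally show ?thesis by simp
qed

lemma eigensystem_snocI:
  assumes I: "eigensystem n H L" and eig: "is_eigvec n H e w" and unit: "cinner n w w = 1"
    and orth: "\<And>q. q < length L \<Longrightarrow> cinner n (snd (L!q)) w = 0"
  shows "eigensystem n H (L @ [(e,w)])"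
  unfolding eigensystem_def
proof (intro conjI allI impI)
  fix q assume "q < length (L @ [(e,w)])"
  thus "is_eigvec n H (fst ((L @ [(e,w)]) ! q)) (snd ((L @ [(e,w)]) ! q))"
    using I eig unfolding eigensystem_def by (cases "q < length L") (auto simp: nth_append)
next
  have orth': "cinner n w (snd (L!q)) = 0" if "q < length L" for q
    using orth[OF that] by (metis cinner_cnj complex_cnj_zero)
  fix q r assume q: "q < length (L @ [(e,w)])" and r: "r < length (L @ [(e,w)])"
  show "cinner n (snd ((L @ [(e,w)]) ! q)) (snd ((L @ [(e,w)]) ! r)) = (if q = r then 1 else 0)"
  proof (cases "q < length L"; cases "r < length L")
    assume "q < length L" "r < length L"
    thus ?thesis using I unfolding eigensystem_def by (simp add: nth_append)
  next
    assume "q < length L" "\<not> r < length L"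
    with r have "r = length L" by simp
    thus ?thesis using orth \<open>q < length L\<close> by (simp add: nth_append)
  next
    assume "\<not> q < length L" "r < length L"
    with q have "q = length L" by simp
    thus ?thesis using orth' \<open>r < length L\<close> by (simp add: nth_append)
  next
    assume "\<not> q < length L" "\<not> r < length L"
    with q r have "q = length L" "r = length L" by auto
    thus ?thesis using unit by (simp add: nth_append)
  qed
qed

lemma eigensystem_extend:
  assumes I: "eigensystem n H L"
    and eig: "\<And>a. a < n \<Longrightarrow> matvec n H w0 a = of_real e * w0 a"
    and orth: "\<And>q. q < length L \<Longrightarrow> cinner n (snd (L!q)) w0 = 0"
    and nz: "a0 < n" "w0 a0 \<noteq> 0"
  shows "\<exists>w. eigensystem n H (L @ [(e,w)])"
proof -
  define s where "s = (\<Sum>a<n. (cmod (w0 a))\<^sup>2)"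
  have s_pos: "s > 0" unfolding s_def using nz by (rule norm_sq_pos)
  define c where "c = 1 / sqrt s"
  define w where "w = (\<lambda>a. of_real c * w0 a)"
  have "cinner n w w = cnj (of_real c) * (of_real c * of_real s)"
    unfolding w_def cinner_scale_l cinner_scale_r cinner_self s_def ..
  also have "\<dots> = of_real (c * c * s)" by simp
  also have "c * c * s = 1" unfolding c_def using s_pos by (simp add: field_simps)
  finally have "cinner n w w = 1" by simp
  moreover have "is_eigvec n H e w" unfolding is_eigvec_def w_def using eig by (simp add: matvec_scale)
  moreover have "cinner n (snd (L!q)) w = 0" if "q < length L" for q
    unfolding w_def cinner_scale_r using orth[OF that] by simp
  ultimately show ?thesis using eigensystem_snocI[OF I] by blast
qed

text \<open>If \<open>H\<close> is not yet fully decomposed by \<open>L\<close>, an eigenvector of the residual for a nonzero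
  eigenvalue is an eigenvector of \<open>H\<close> orthogonal to \<open>L\<close>, so \<open>L\<close> can be extended.\<close>
lemma eigensystem_step:
  assumes H: "is_hermitian n H" and I: "eigensystem n H L"
    and nz: "a < n" "b < n" "residual n H L $$ (a,b) \<noteq> 0"
  shows "\<exists>e w. eigensystem n H (L @ [(e,w)])"
proof -
  define K where "K = residual n H L"
  have K: "is_hermitian n K" unfolding K_def by (rule residual_hermitian[OF H])
  have Kc: "K \<in> carrier_mat n n" using K unfolding is_hermitian_def by simp
  obtain e v where ev: "eigenvector K v e" and e0: "e \<noteq> 0"
    using hermitian_nonzero_eigenvalue[OF K nz(1,2)] nz(3) unfolding K_def by blast
  have v: "v \<in> carrier_vec n" and v0: "v \<noteq> 0\<^sub>v n" and Kv: "K *\<^sub>v v = e \<cdot>\<^sub>v v"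
    using ev Kc unfolding eigenvector_def by auto
  define w0 where "w0 = (\<lambda>a. v $ a)"
  have Kw0: "matvec n K w0 a = e * w0 a" if "a < n" for a
  proof -
    have "(K *\<^sub>v v) $ a = matvec n K w0 a"
      using that v Kc unfolding matvec_def w0_def
      by (simp add: scalar_prod_def lessThan_atLeast0 row_def)
    thus ?thesis using Kv that v unfolding w0_def by simp
  qed
  obtain a0 where a0: "a0 < n" "w0 a0 \<noteq> 0"
    using v v0 unfolding w0_def by (metis vec_eq_iff carrier_vecD index_zero_vec(1,2))
  have e_real: "e = of_real (Re e)" by (rule hermitian_eigenvalue_real[OF K Kw0 a0])
  have orth: "cinner n (snd (L!q)) w0 = 0" if q: "q < length L" for q
  proof -
    have "e * cinner n (snd (L!q)) w0 = cinner n (snd (L!q)) (matvec n K w0)"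
      by (simp add: cinner_scale_r cinner_cong[OF _ Kw0])
    also have "\<dots> = cinner n (matvec n K (snd (L!q))) w0" by (rule hermitian_cinner_sym[OF K])
    also have "\<dots> = 0"
      unfolding K_def cinner_def using residual_annihilates[OF I q] by simp
    finally show ?thesis using e0 by simp
  qed
  have "matvec n H w0 a = of_real (Re e) * w0 a" if a: "a < n" for a
    using matvec_residual[OF a, of H w0 L] Kw0[OF a] e_real orth unfolding K_def by simp
  thus ?thesis using eigensystem_extend[OF I _ orth a0] by blast
qed

text \<open>Extending eigen-systems must stop, since their length is at most \<open>n\<close>.\<close>
theorem spectral_theorem:
  assumes H: "is_hermitian n H"
  shows "\<exists>L. eigensystem n H L \<and> (\<forall>a<n. \<forall>b<n.
     H $$ (a,b) = (\<Sum>q<length L. of_real (fst (L!q)) * snd (L!q) a * cnj (snd (L!q) b)))"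
proof (rule ccontr)
  assume complete: "\<not> ?thesis"
  have "\<exists>L. eigensystem n H L \<and> length L = k" for k
  proof (induction k)
    case 0 show ?case by (intro exI[of _ "[]"]) (simp add: eigensystem_def)
  next
    case (Suc k)
    then obtain L where L: "eigensystem n H L" "length L = k" by blast
    with complete obtain a b where ab: "a < n" "b < n"
      "H $$ (a,b) \<noteq> (\<Sum>q<length L. of_real (fst (L!q)) * snd (L!q) a * cnj (snd (L!q) b))"
      by blast
    hence "residual n H L $$ (a,b) \<noteq> 0" unfolding residual_def by simp
    from eigensystem_step[OF H L(1) ab(1,2) this] obtain e w
      where "eigensystem n H (L @ [(e,w)])" by blast
    thus ?case using L(2) by (intro exI[of _ "L @ [(e,w)]"]) simp
  qed
  from this[of "Suc n"] eigensystem_length show False by fastforce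
qed

lemma spectral_trace:
  assumes I: "eigensystem n H L"
    and HL: "\<forall>a<n. \<forall>b<n. H $$ (a,b) = (\<Sum>q<length L. of_real (fst (L!q)) * snd (L!q) a * cnj (snd (L!q) b))"
  shows "of_real (\<Sum>q<length L. fst (L!q)) = (\<Sum>a<n. H $$ (a,a))"
proof -
  have "(\<Sum>a<n. H $$ (a,a)) = (\<Sum>a<n. \<Sum>q<length L. of_real (fst (L!q)) * of_real ((cmod (snd (L!q) a))\<^sup>2))"
  proof (intro sum.cong refl)
    fix a assume "a \<in> {..<n}"
    hence "H $$ (a,a) = (\<Sum>q<length L. of_real (fst (L!q)) * snd (L!q) a * cnj (snd (L!q) a))"
      using HL by simp
    also have "\<dots> = (\<Sum>q<length L. of_real (fst (L!q)) * of_real ((cmod (snd (L!q) a))\<^sup>2))"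
      by (intro sum.cong refl) (simp only: mult.assoc complex_norm_square)
    finally show "H $$ (a,a) = \<dots>" .
  qed
  also have "\<dots> = (\<Sum>q<length L. of_real (fst (L!q)) * of_real (\<Sum>a<n. (cmod (snd (L!q) a))\<^sup>2))"
    by (subst sum.swap) (simp add: sum_distrib_left of_real_sum)
  also have "\<dots> = (\<Sum>q<length L. of_real (fst (L!q)))" using eigensystem_unit[OF I] by simp
  finally show ?thesis by simp
qed


section \<open>Entries of \<open>W\<close> and \<open>W~(p)\<close>\<close>

text \<open>The basis vector \<open>|ab\<rangle>\<close> of \<open>\<complex>\<^sup>n \<otimes> \<complex>\<^sup>n\<close> has index \<open>a*n+b\<close>.\<close>

lemma idx_lt: "a < n \<Longrightarrow> b < n \<Longrightarrow> a * n + b < n * (n::nat)"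
proof -
  assume "a < n" "b < n"
  hence "a * n + b < (a + 1) * n" by simp
  also have "\<dots> \<le> n * n" using \<open>a < n\<close> by (intro mult_right_mono) auto
  finally show ?thesis .
qed

lemma idx_decompose:
  assumes "r < n * (n::nat)"
  obtains a b where "a < n" "b < n" "r = a * n + b"
proof
  have "n > 0" using assms by (cases n) auto
  thus "r div n < n" "r mod n < n" "r = r div n * n + r mod n"
    using assms by (auto simp: less_mult_imp_div_less)
qed

lemma sum_idx: "(\<Sum>r<n*n. f r) = (\<Sum>a<n. \<Sum>b<(n::nat). f (a*n+b))"
proof -
  have "sum f {a*n..<a*n+n} = (\<Sum>b<n. f (a*n+b))" for a
  proof -
    have "{a*n..<a*n+n} = (\<lambda>b. a*n+b) ` {..<n}"
      by (simp add: image_add_atLeastLessThan lessThan_atLeast0 add.commute)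
    thus ?thesis by (simp add: sum.reindex inj_on_def)
  qed
  thus ?thesis by (simp add: sum.nat_group[symmetric])
qed

lemma mat_eq_idxI:
  assumes "A \<in> carrier_mat (n*n) (n*n)" "B \<in> carrier_mat (n*n) (n*n)"
    and "\<And>a b a' b'. a < n \<Longrightarrow> b < n \<Longrightarrow> a' < n \<Longrightarrow> b' < n \<Longrightarrow>
           A $$ (a*n+b, a'*n+b') = B $$ (a*n+b, a'*n+b')"
  shows "A = B"
proof (rule eq_matI)
  fix i j assume "i < dim_row B" "j < dim_col B"
  hence "i < n*n" "j < n*n" using assms(2) by auto
  thus "A $$ (i,j) = B $$ (i,j)" using assms(3) by (metis idx_decompose)
qed (use assms in auto)

lemma kron_idx:
  assumes "A \<in> carrier_mat n n" "B \<in> carrier_mat n n" "a < n" "b < n" "a' < n" "b' < n"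
  shows "kron A B $$ (a*n+b, a'*n+b') = A $$ (a,a') * B $$ (b,b')"
  using assms idx_lt[of a n b] idx_lt[of a' n b'] unfolding kron_def by simp

lemma sum_delta2:
  "a < (n::nat) \<Longrightarrow> a' < n \<Longrightarrow>
   (\<Sum>i<n. \<Sum>j<n. if i = a \<and> j = a' then f i j else 0) = (f a a' :: 'a::comm_monoid_add)"
proof -
  assume a: "a < n" "a' < n"
  have "(\<Sum>i<n. \<Sum>j<n. if i = a \<and> j = a' then f i j else 0) = (\<Sum>i<n. if i = a then f i a' else 0)"
    using a by (intro sum.cong refl) (auto simp: sum.delta)
  thus ?thesis using a by simp
qed

lemma eunit_idx: "i < n \<Longrightarrow> j < n \<Longrightarrow> eunit n a b $$ (i,j) = (if i = a \<and> j = b then 1 else 0)"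
  unfolding eunit_def by simp

lemma R_map_carrier: "R_map n z X \<in> carrier_mat n n" unfolding R_map_def by simp
lemma eunit_carrier: "eunit n i j \<in> carrier_mat n n" unfolding eunit_def by simp

lemma R_map_eunit:
  assumes "a < n" "a' < n" "b < n" "b' < n"
  shows "R_map n z (eunit n a a') $$ (b,b') = R_basis n z a a' $$ (b,b')"
proof -
  have "R_map n z (eunit n a a') $$ (b,b') =
      (\<Sum>i<n. \<Sum>j<n. if i = a \<and> j = a' then R_basis n z i j $$ (b,b') else 0)"
    unfolding R_map_def using assms by (auto simp: eunit_idx intro!: sum.cong)
  also have "\<dots> = R_basis n z a a' $$ (b,b')" using assms(1,2) by (rule sum_delta2)
  finally show ?thesis .
qed

lemma R_basis_idx:
  assumes "b < n" "b' < n"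
  shows "R_basis n z a a' $$ (b,b') =
    (if a = a' then (1 / (of_nat n - 1)) * ((if b = b' then 1 else 0) - (if b = a \<and> b' = a then 1 else 0))
     else (- z a a' / (of_nat n - 1)) * (if b = a \<and> b' = a' then 1 else 0))"
  unfolding R_basis_def eunit_def using assms by auto

lemma W_idx:
  assumes "a < n" "a' < n" "b < n" "b' < n"
  shows "W_mat n z $$ (a*n+b, a'*n+b') = (1 / of_nat n) * R_basis n z a a' $$ (b,b')"
proof -
  have "(\<Sum>i<n. \<Sum>j<n. kron (eunit n i j) (R_map n z (eunit n i j)) $$ (a*n+b, a'*n+b'))
     = (\<Sum>i<n. \<Sum>j<n. if i = a \<and> j = a' then R_map n z (eunit n i j) $$ (b,b') else 0)"
    using assms
    by (intro sum.cong refl) (auto simp: kron_idx[where n=n] eunit_idx R_map_carrier eunit_carrier)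
  also have "\<dots> = R_map n z (eunit n a a') $$ (b,b')" using assms(1,2) by (rule sum_delta2)
  finally show ?thesis
    unfolding W_mat_def using assms idx_lt[of a n b] idx_lt[of a' n b'] by (simp add: R_map_eunit)
qed

lemma W_tilde_idx:
  assumes n2: "n \<ge> 2" and ab: "a < n" "a' < n" "b < n" "b' < n"
  shows "W_tilde n z p $$ (a*n+b, a'*n+b') =
     of_real ((1-p)/(real n)\<^sup>2) * (if a = a' \<and> b = b' then 1 else 0)
     + of_real (p / (real n * (real n - 1))) * (if a = a' then (if b = b' \<and> b \<noteq> a then 1 else 0)
          else (if b = a \<and> b' = a' then - z a a' else 0))"
proof -
  have I: "kron (1\<^sub>m n) (1\<^sub>m n) $$ (a*n+b, a'*n+b') = (if a = a' \<and> b = b' then 1 else 0)"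
    using ab by (simp add: kron_idx[where n=n])
  have "W_tilde n z p $$ (a*n+b, a'*n+b') =
      of_real ((1-p)/(real n)\<^sup>2) * kron (1\<^sub>m n) (1\<^sub>m n) $$ (a*n+b, a'*n+b')
      + of_real p * W_mat n z $$ (a*n+b, a'*n+b')"
    unfolding W_tilde_def using ab idx_lt[of a n b] idx_lt[of a' n b']
    by (simp add: kron_def W_mat_def)
  also note W_idx[OF ab]
  also note R_basis_idx[OF ab(3,4)]
  finally have e: "W_tilde n z p $$ (a*n+b, a'*n+b') =
      of_real ((1-p)/(real n)\<^sup>2) * (if a = a' \<and> b = b' then 1 else 0)
      + of_real p * ((1 / of_nat n) * (if a = a' then (1 / (of_nat n - 1)) *
          ((if b = b' then 1 else 0) - (if b = a \<and> b' = a then 1 else 0))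
       else (- z a a' / (of_nat n - 1)) * (if b = a \<and> b' = a' then 1 else 0)))"
    unfolding I .
  have nn: "(of_nat n :: complex) - 1 = of_real (real n - 1)" by simp
  have nz: "real n - 1 \<noteq> 0" "real n \<noteq> 0" using n2 by auto
  show ?thesis unfolding e nn using nz
    by (cases "a = a'"; cases "b = b'"; cases "b = a"; cases "b' = a'") (auto simp: field_simps)
qed

section \<open>The Hermitian matrix \<open>H = d I - c Z\<close> and its spectrum\<close>

definition Zmat :: "nat \<Rightarrow> (nat \<Rightarrow> nat \<Rightarrow> complex) \<Rightarrow> nat \<Rightarrow> nat \<Rightarrow> complex" where
  "Zmat n z i j = (if i = j then 0 else z i j)"

definition Hmat :: "nat \<Rightarrow> (nat \<Rightarrow> nat \<Rightarrow> complex) \<Rightarrow> real \<Rightarrow> real \<Rightarrow> complex mat" where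
  "Hmat n z d c = mat n n (\<lambda>(i,j). of_real d * (if i = j then 1 else 0) - of_real c * Zmat n z i j)"

lemma Hmat_hermitian:
  assumes herm: "\<And>i j. i < j \<Longrightarrow> j < n \<Longrightarrow> z j i = cnj (z i j)"
  shows "is_hermitian n (Hmat n z d c)"
proof -
  have Zh: "Zmat n z a b = cnj (Zmat n z b a)" if "a < n" "b < n" for a b
  proof -
    consider "a = b" | "a < b" | "b < a" by linarith
    thus ?thesis
    proof cases
      case 2 thus ?thesis unfolding Zmat_def using herm[OF 2 that(2)] by simp
    next
      case 3 thus ?thesis unfolding Zmat_def using herm[OF 3 that(1)] by simp
    qed (simp add: Zmat_def)
  qed
  show ?thesis unfolding is_hermitian_def
  proof (intro conjI allI impI)
    fix a b assume ab: "a < n" "b < n"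
    have "cnj (Zmat n z b a) = Zmat n z a b" using Zh[OF ab] by simp
    thus "Hmat n z d c $$ (a,b) = cnj (Hmat n z d c $$ (b,a))" unfolding Hmat_def using ab by auto
  qed (simp add: Hmat_def)
qed

lemma W_diagonal_vector:
  assumes ab: "a < n" "b < n"
  shows "(\<Sum>r<n*n. W_mat n z $$ (a*n+b, r) * (if r div n = r mod n then u (r div n) else 0))
      = (if b = a then - (1 / (of_nat n * (of_nat n - 1))) * (\<Sum>a'<n. Zmat n z a a' * u a') else 0)"
proof -
  have "(\<Sum>r<n*n. W_mat n z $$ (a*n+b, r) * (if r div n = r mod n then u (r div n) else 0))
     = (\<Sum>a'<n. \<Sum>b'<n. W_mat n z $$ (a*n+b, a'*n+b') * (if a' = b' then u a' else 0))"
    by (subst sum_idx) (intro sum.cong refl, simp)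
  also have "\<dots> = (\<Sum>a'<n. W_mat n z $$ (a*n+b, a'*n+a') * u a')"
    by (intro sum.cong refl) (simp add: if_distrib[of "\<lambda>x. _ * x"] sum.delta cong: if_cong)
  also have "\<dots> = (\<Sum>a'<n. (if b = a then - (1 / (of_nat n * (of_nat n - 1))) * Zmat n z a a' else 0) * u a')"
    using ab by (intro sum.cong refl) (auto simp: W_idx R_basis_idx Zmat_def)
  also have "\<dots> = (if b = a then - (1 / (of_nat n * (of_nat n - 1))) * (\<Sum>a'<n. Zmat n z a a' * u a') else 0)"
    by (auto simp: sum_distrib_left mult.assoc)
  finally show ?thesis .
qed

lemma W_diagonal_eigenvector:
  assumes Zu: "\<And>a. a < n \<Longrightarrow> (\<Sum>a'<n. Zmat n z a a' * u a') = \<kappa> * u a"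
    and u0: "a0 < n" "u a0 \<noteq> 0"
  shows "eigenvector (W_mat n z) (vec (n*n) (\<lambda>r. if r div n = r mod n then u (r div n) else 0))
           (- \<kappa> / (of_nat n * (of_nat n - 1)))"
    (is "eigenvector _ ?v ?\<mu>")
  unfolding eigenvector_def
proof (intro conjI)
  have Wc: "W_mat n z \<in> carrier_mat (n*n) (n*n)" unfolding W_mat_def by simp
  show "?v \<in> carrier_vec (dim_row (W_mat n z))" using Wc by simp
  have "?v $ (a0*n+a0) = u a0" using idx_lt[OF u0(1) u0(1)] u0 by simp
  moreover have "(0\<^sub>v (n*n) :: complex vec) $ (a0*n+a0) = 0" using idx_lt[OF u0(1) u0(1)] by simp
  ultimately show "?v \<noteq> 0\<^sub>v (dim_row (W_mat n z))" using u0 Wc by auto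
  show "W_mat n z *\<^sub>v ?v = ?\<mu> \<cdot>\<^sub>v ?v"
  proof (rule eq_vecI)
    show "dim_vec (W_mat n z *\<^sub>v ?v) = dim_vec (?\<mu> \<cdot>\<^sub>v ?v)" using Wc by simp
    fix r assume "r < dim_vec (?\<mu> \<cdot>\<^sub>v ?v)"
    then obtain a b where ab: "a < n" "b < n" "r = a*n+b" by (auto elim: idx_decompose)
    have "(W_mat n z *\<^sub>v ?v) $ r = (\<Sum>r'<n*n. W_mat n z $$ (a*n+b, r') *
        (if r' div n = r' mod n then u (r' div n) else 0))"
      using ab idx_lt[OF ab(1,2)] Wc by (simp add: scalar_prod_def lessThan_atLeast0 row_def)
    also have "\<dots> = (if b = a then ?\<mu> * u a else 0)"
      unfolding W_diagonal_vector[OF ab(1,2)] Zu[OF ab(1)] by simp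
    also have "\<dots> = (?\<mu> \<cdot>\<^sub>v ?v) $ r" using ab idx_lt[OF ab(1,2)] by auto
    finally show "(W_mat n z *\<^sub>v ?v) $ r = (?\<mu> \<cdot>\<^sub>v ?v) $ r" .
  qed
qed

lemma Hmat_eigenvalue_lower_bound:
  assumes n2: "n \<ge> 2" and c: "c > 0"
    and lam_min: "\<And>\<mu>. eigenvalue (W_mat n z) \<mu> \<Longrightarrow> lam \<le> Re \<mu>"
    and ev: "is_eigvec n (Hmat n z d c) l u" and u0: "a0 < n" "u a0 \<noteq> 0"
  shows "d + c * (real n * (real n - 1)) * lam \<le> l"
proof -
  have Zu: "(\<Sum>a'<n. Zmat n z a a' * u a') = of_real ((d - l) / c) * u a" if a: "a < n" for a
  proof -
    have "of_real l * u a = matvec n (Hmat n z d c) u a" using ev a unfolding is_eigvec_def by simp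
    also have "\<dots> = (\<Sum>b<n. (if a = b then of_real d * u b else 0) - of_real c * (Zmat n z a b * u b))"
      unfolding matvec_def Hmat_def using a by (intro sum.cong refl) (auto simp: algebra_simps)
    also have "\<dots> = of_real d * u a - of_real c * (\<Sum>b<n. Zmat n z a b * u b)"
      using a by (simp add: sum_subtractf sum_distrib_left)
    finally show ?thesis using c by (simp add: field_simps)
  qed
  have "eigenvalue (W_mat n z) (- of_real ((d - l) / c) / (of_nat n * (of_nat n - 1)))"
    using W_diagonal_eigenvector[OF Zu u0] unfolding eigenvalue_def by blast
  hence "lam \<le> - ((d - l) / c) / (real n * (real n - 1))" using lam_min by fastforce
  moreover have "real n * (real n - 1) > 0" using n2 by simp
  ultimately show ?thesis using c by (simp add: field_simps)
qed


section \<open>Averaging over phases\<close>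

lemma pow4_sum_bounds:
  assumes "i \<le> l"
  shows "(4::nat)^l \<le> 4^i + 4^l" "(4::nat)^i + 4^l < 4^Suc l"
proof -
  have "(4::nat)^i \<le> 4^l" "(0::nat) < 4^l" using assms by (simp_all add: power_increasing)
  thus "(4::nat)^l \<le> 4^i + 4^l" "(4::nat)^i + 4^l < 4^Suc l" unfolding power_Suc by linarith+
qed

lemma pow4_sum_inj:
  fixes i l j k :: nat
  assumes "i \<le> l" "j \<le> k" and eq: "(4::nat)^i + 4^l = 4^j + 4^k"
  shows "i = j \<and> l = k"
proof -
  have "4^l < (4::nat)^Suc k" "4^k < (4::nat)^Suc l"
    using pow4_sum_bounds[OF assms(1)] pow4_sum_bounds[OF assms(2)] eq by linarith+
  hence "l = k" by (simp only: power_strict_increasing_iff)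
  with eq have "(4::nat)^i = 4^j" by simp
  with \<open>l = k\<close> show ?thesis by (simp add: power_inject_exp)
qed

lemma pow4_sum_eq:
  fixes i l j k :: nat
  assumes eq: "(4::nat)^i + 4^l = 4^j + 4^k"
  shows "(i = j \<and> l = k) \<or> (i = k \<and> l = j)"
proof -
  have "(4::nat)^min i l + 4^max i l = 4^min j k + 4^max j k"
    using eq by (simp add: min_def max_def add.commute split: if_splits)
  hence "min i l = min j k \<and> max i l = max j k" by (intro pow4_sum_inj) auto
  thus ?thesis by (auto simp: min_def max_def split: if_splits)
qed

lemma sum_roots_of_unity:
  fixes e :: int and N :: nat
  assumes N: "N > 0" and e: "\<bar>e\<bar> < int N"
  shows "(\<Sum>t<N. cis (2 * pi * real t * real_of_int e / real N)) = (if e = 0 then of_nat N else 0)"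
proof (cases "e = 0")
  case True thus ?thesis by simp
next
  case False
  define \<zeta> where "\<zeta> = cis (2 * pi * real_of_int e / real N)"
  have powers: "cis (2 * pi * real t * real_of_int e / real N) = \<zeta> ^ t" for t
    unfolding \<zeta>_def DeMoivre by (simp add: field_simps)
  have "\<zeta> \<noteq> 1"
  proof
    assume "\<zeta> = 1"
    hence "cos (2 * pi * real_of_int e / real N) = 1" unfolding \<zeta>_def
      by (metis complex.sel(1) cis.sel(1) one_complex.sel(1))
    then obtain k :: int where "2 * pi * real_of_int e / real N = real_of_int k * 2 * pi"
      unfolding cos_one_2pi_int by blast
    hence "real_of_int e = real_of_int k * real N" using N by (simp add: field_simps)
    hence ek: "e = k * int N" by (metis of_int_eq_iff of_int_mult of_int_of_nat_eq)
    with False have "k \<noteq> 0" by auto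
    hence "\<bar>e\<bar> \<ge> int N" unfolding ek abs_mult
      by (simp add: mult_le_cancel_right1 abs_ge_zero) (smt (verit))
    with e show False by simp
  qed
  moreover have "\<zeta> ^ N = 1"
    unfolding \<zeta>_def DeMoivre using N by (simp add: cis_multiple_2pi)
  ultimately have "(\<Sum>t<N. \<zeta> ^ t) = 0" by (simp add: sum_gp_strict)
  thus ?thesis using False by (simp add: powers)
qed

definition phase :: "nat \<Rightarrow> nat \<Rightarrow> nat \<Rightarrow> complex" where
  "phase n t a = cis (2 * pi * real t * real (4^a) / real ((4::nat)^n))"

lemma phase_norm [simp]: "cmod (phase n t a) = 1"
  unfolding phase_def by simp

lemma phase_prod:
  "phase n t a * cnj (phase n t a') * cnj (phase n t b) * phase n t b'
   = cis (2 * pi * real t * real_of_int (int (4^a) - int (4^a') - int (4^b) + int (4^b')) / real ((4::nat)^n))"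
  unfolding phase_def cis_cnj cis_mult
  by (intro arg_cong[where f=cis]) (simp add: diff_divide_distrib add_divide_distrib algebra_simps)

lemma phase_average:
  assumes "a < n" "a' < n" "b < n" "b' < n"
  shows "(\<Sum>t<4^n. phase n t a * cnj (phase n t a') * cnj (phase n t b) * phase n t b')
     = (if (a = a' \<and> b = b') \<or> (a = b \<and> a' = b') then of_nat (4^n) else 0)"
proof -
  define e where "e = int (4^a) - int (4^a') - int (4^b) + int (4^b')"
  have bound: "4 * (4::nat)^x \<le> 4^n" if "x < n" for x
    using power_increasing[of "Suc x" n "4::nat"] that by simp
  have "(0::nat) < 4^n" by simp
  hence "\<bar>e\<bar> < int (4^n)" unfolding e_def using bound[OF assms(1)] bound[OF assms(2)]
      bound[OF assms(3)] bound[OF assms(4)] by linarith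
  hence "(\<Sum>t<4^n. phase n t a * cnj (phase n t a') * cnj (phase n t b) * phase n t b')
      = (if e = 0 then of_nat (4^n) else 0)"
    unfolding phase_prod e_def[symmetric] by (intro sum_roots_of_unity) auto
  also have "(e = 0) = ((a = a' \<and> b = b') \<or> (a = b \<and> a' = b'))"
  proof
    assume "e = 0"
    hence "(4::nat)^a + 4^b' = 4^a' + 4^b" unfolding e_def by linarith
    from pow4_sum_eq[OF this] show "(a = a' \<and> b = b') \<or> (a = b \<and> a' = b')" by auto
  qed (auto simp: e_def)
  finally show ?thesis .
qed

section \<open>Separability of phase-twirled operators\<close>

definition proj :: "nat \<Rightarrow> (nat \<Rightarrow> complex) \<Rightarrow> complex mat" where
  "proj n x = mat n n (\<lambda>(a,b). x a * cnj (x b))"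

lemma proj_idx: "a < n \<Longrightarrow> b < n \<Longrightarrow> proj n x $$ (a,b) = x a * cnj (x b)"
  unfolding proj_def by simp

lemma proj_carrier: "proj n x \<in> carrier_mat n n"
  unfolding proj_def by simp

lemma proj_state:
  assumes x: "(\<Sum>a<n. (cmod (x a))\<^sup>2) = 1"
  shows "is_state n (proj n x)"
  unfolding is_state_def psd_def
proof (intro conjI allI)
  show "proj n x \<in> carrier_mat n n" by (rule proj_carrier)
  fix v :: "nat \<Rightarrow> complex"
  define \<alpha> where "\<alpha> = (\<Sum>a<n. cnj (v a) * x a)"
  have "(\<Sum>a<n. \<Sum>b<n. cnj (v a) * proj n x $$ (a,b) * v b)
      = (\<Sum>a<n. \<Sum>b<n. (cnj (v a) * x a) * (cnj (x b) * v b))"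
    by (intro sum.cong refl) (simp add: proj_idx mult.assoc mult.left_commute)
  also have "\<dots> = \<alpha> * cnj \<alpha>" unfolding \<alpha>_def cnj_sum sum_product
    by (intro sum.cong refl) (simp add: mult.commute)
  also have "\<dots> = of_real ((cmod \<alpha>)\<^sup>2)" by (metis complex_norm_square)
  finally show "let q = (\<Sum>a<n. \<Sum>b<n. cnj (v a) * proj n x $$ (a,b) * v b) in Im q = 0 \<and> Re q \<ge> 0"
    unfolding Let_def by simp
next
  have "(\<Sum>a<n. proj n x $$ (a,a)) = (\<Sum>a<n. of_real ((cmod (x a))\<^sup>2))"
    by (intro sum.cong refl) (simp add: proj_idx, metis complex_norm_square of_real_power)
  also have "\<dots> = 1" using x by (metis of_real_1 of_real_sum)
  finally show "(\<Sum>a<n. proj n x $$ (a,a)) = 1" .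
qed

lemma separableI_finite:
  fixes S :: "'x set"
  assumes S: "finite S" and w0: "\<And>x. x \<in> S \<Longrightarrow> w x \<ge> 0" and w1: "(\<Sum>x\<in>S. w x) = 1"
    and st: "\<And>x. x \<in> S \<Longrightarrow> is_state n (A x) \<and> is_state n (B x)"
    and rho: "\<rho> = mat (n*n) (n*n) (\<lambda>(r,c). \<Sum>x\<in>S. complex_of_real (w x) * kron (A x) (B x) $$ (r,c))"
  shows "separable n \<rho>"
proof -
  obtain h where h: "bij_betw h {..<card S} S"
    using ex_bij_betw_nat_finite[OF S] by (auto simp: lessThan_atLeast0)
  have reindex: "(\<Sum>k<card S. g (h k)) = (\<Sum>x\<in>S. g x)" for g :: "'x \<Rightarrow> 'b::comm_monoid_add"
    using sum.reindex_bij_betw[OF h, of g] by simp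
  have "h k \<in> S" if "k < card S" for k using h that by (auto simp: bij_betw_def)
  moreover have "\<rho> = mat (n*n) (n*n) (\<lambda>(r,c). \<Sum>k<card S. complex_of_real ((w \<circ> h) k) *
      kron ((A \<circ> h) k) ((B \<circ> h) k) $$ (r,c))"
    unfolding rho by (intro eq_matI) (simp_all add: reindex[symmetric])
  moreover have "(\<Sum>k<card S. (w \<circ> h) k) = 1" using reindex[of w] w1 by simp
  ultimately show ?thesis unfolding separable_def using w0 st
    by (intro exI[of _ "card S"] exI[of _ "w \<circ> h"] exI[of _ "A \<circ> h"] exI[of _ "B \<circ> h"]) auto
qed


text \<open>The product states realising the twirl of \<open>\<Sum>\<^sub>q \<lambda>\<^sub>q u\<^sub>q u\<^sub>q\<^sup>*\<close> plus \<open>c \<Sum>\<^sub>a\<^sub>\<noteq>\<^sub>b |ab\<rangle>\<langle>ab|\<close>: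
  index \<open>Inl (q,t)\<close> carries \<open>|u\<^sub>q w\<^sub>t\<rangle> \<otimes> |w\<^sub>t\<^sup>*/\<surd>n\<rangle>\<close> with weight \<open>\<lambda>\<^sub>q n / 4\<^sup>n\<close>, index \<open>Inr (i,k)\<close>
  carries \<open>|i\<rangle> \<otimes> |k\<rangle>\<close> with weight \<open>c\<close> if \<open>i \<noteq> k\<close>.\<close>
definition twirl_index :: "nat \<Rightarrow> (real \<times> (nat \<Rightarrow> complex)) list \<Rightarrow> (nat \<times> nat + nat \<times> nat) set" where
  "twirl_index n L = ({..<length L} \<times> {..<4^n}) <+> ({..<n} \<times> {..<n})"

definition twirl_weight ::
  "nat \<Rightarrow> (real \<times> (nat \<Rightarrow> complex)) list \<Rightarrow> real \<Rightarrow> nat \<times> nat + nat \<times> nat \<Rightarrow> real" where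
  "twirl_weight n L c = case_sum (\<lambda>(q,t). fst (L!q) * real n / real ((4::nat)^n))
                                 (\<lambda>(i,k). if i \<noteq> k then c else 0)"

definition twirl_left :: "nat \<Rightarrow> (real \<times> (nat \<Rightarrow> complex)) list \<Rightarrow> nat \<times> nat + nat \<times> nat \<Rightarrow> complex mat" where
  "twirl_left n L = case_sum (\<lambda>(q,t). proj n (\<lambda>a. snd (L!q) a * phase n t a))
                             (\<lambda>(i,k). proj n (\<lambda>a. if a = i then 1 else 0))"

definition twirl_right :: "nat \<Rightarrow> nat \<times> nat + nat \<times> nat \<Rightarrow> complex mat" where
  "twirl_right n = case_sum (\<lambda>(q,t). proj n (\<lambda>a. of_real (1 / sqrt (real n)) * cnj (phase n t a)))
                            (\<lambda>(i,k). proj n (\<lambda>a. if a = k then 1 else 0))"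

lemma sum_pairs: "(\<Sum>y\<in>A \<times> B. f y) = (\<Sum>i\<in>A. \<Sum>k\<in>B. f (i,k))"
  by (simp add: sum.cartesian_product)

lemma twirl_states:
  assumes n: "n > 0"
    and unit: "\<And>q. q < length L \<Longrightarrow> (\<Sum>a<n. (cmod (snd (L!q) a))\<^sup>2) = 1"
    and x: "x \<in> twirl_index n L"
  shows "is_state n (twirl_left n L x) \<and> is_state n (twirl_right n x)"
proof -
  have basis: "(\<Sum>a<n. (cmod (if a = i then 1 else 0 :: complex))\<^sup>2) = 1" if "i < n" for i
    using that by (simp add: if_distrib[of "\<lambda>x. (cmod x)\<^sup>2"] cong: if_cong)
  have "(cmod (complex_of_real (1 / sqrt (real n)) * cnj (phase n t a)))\<^sup>2 = 1 / real n" for t a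
    using n by (simp add: norm_mult norm_divide power_divide)
  hence flat: "(\<Sum>a<n. (cmod (complex_of_real (1 / sqrt (real n)) * cnj (phase n t a)))\<^sup>2) = 1" for t
    using n by simp
  from x consider q t where "x = Inl (q,t)" "q < length L" | i k where "x = Inr (i,k)" "i < n" "k < n"
    unfolding twirl_index_def by auto
  thus ?thesis
  proof cases
    case 1
    have "(\<Sum>a<n. (cmod (snd (L!q) a * phase n t a))\<^sup>2) = 1" using unit[OF 1(2)] by (simp add: norm_mult)
    thus ?thesis unfolding 1 twirl_left_def twirl_right_def using proj_state flat by simp
  next
    case 2 thus ?thesis unfolding twirl_left_def twirl_right_def using proj_state basis by simp
  qed
qed

lemma twirl_weights_nonneg:
  assumes "\<And>q. q < length L \<Longrightarrow> fst (L!q) \<ge> 0" "c \<ge> 0" "x \<in> twirl_index n L"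
  shows "twirl_weight n L c x \<ge> 0"
  using assms unfolding twirl_index_def twirl_weight_def by auto

lemma twirl_weights_sum:
  "(\<Sum>x\<in>twirl_index n L. twirl_weight n L c x)
     = real n * (\<Sum>q<length L. fst (L!q)) + real n * (real n - 1) * c"
proof -
  have offdiag: "(\<Sum>k<n. if i \<noteq> k then c else 0) = (real n - 1) * c" if "i < n" for i
  proof -
    have "(\<Sum>k<n. if i \<noteq> k then c else 0) = (\<Sum>k<n. c) - (\<Sum>k<n. if k = i then c else 0)"
      by (subst sum_subtractf[symmetric]) (intro sum.cong refl, auto)
    thus ?thesis using that by (simp add: algebra_simps)
  qed
  have "(\<Sum>x\<in>twirl_index n L. twirl_weight n L c x)
      = (\<Sum>y\<in>{..<length L} \<times> {..<4^n}. twirl_weight n L c (Inl y))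
        + (\<Sum>y\<in>{..<n} \<times> {..<n}. twirl_weight n L c (Inr y))"
    unfolding twirl_index_def by (subst sum.Plus) (auto simp: comp_def)
  also have "\<dots> = (\<Sum>q<length L. \<Sum>t<(4::nat)^n. fst (L!q) * real n / real ((4::nat)^n))
        + (\<Sum>i<n. \<Sum>k<n. if i \<noteq> k then c else 0)"
    unfolding sum_pairs twirl_weight_def by simp
  also have "\<dots> = (\<Sum>q<length L. fst (L!q)) * real n + (\<Sum>i<n. (real n - 1) * c)"
    by (simp add: offdiag sum_distrib_right)
  finally show ?thesis by (simp add: algebra_simps)
qed

lemma twirl_summand:
  assumes ab: "a < n" "a' < n" "b < n" "b' < n"
  shows "complex_of_real (twirl_weight n L c (Inl (q,t))) *
        kron (twirl_left n L (Inl (q,t))) (twirl_right n (Inl (q,t))) $$ (a*n+b, a'*n+b')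
      = of_real (fst (L!q) / real ((4::nat)^n)) * (snd (L!q) a * cnj (snd (L!q) a'))
        * (phase n t a * cnj (phase n t a') * cnj (phase n t b) * phase n t b')"
proof -
  define s :: complex where "s = of_real (1 / sqrt (real n))"
  have "fst (L!q) * real n / real ((4::nat)^n) * (1 / sqrt (real n) * (1 / sqrt (real n))) = fst (L!q) / real ((4::nat)^n)"
    using ab by (simp add: field_simps)
  hence scale: "complex_of_real (fst (L!q) * real n / real ((4::nat)^n)) * (s * s) = of_real (fst (L!q) / real ((4::nat)^n))"
    unfolding s_def by (simp only: of_real_mult[symmetric])
  have "kron (twirl_left n L (Inl (q,t))) (twirl_right n (Inl (q,t))) $$ (a*n+b, a'*n+b')
      = (snd (L!q) a * cnj (snd (L!q) a'))
        * (phase n t a * cnj (phase n t a') * cnj (phase n t b) * phase n t b') * (s * s)"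
    using ab unfolding twirl_left_def twirl_right_def s_def
    by (simp add: kron_idx[where n=n] proj_carrier proj_idx mult_ac)
  hence "complex_of_real (twirl_weight n L c (Inl (q,t))) *
        kron (twirl_left n L (Inl (q,t))) (twirl_right n (Inl (q,t))) $$ (a*n+b, a'*n+b')
      = (complex_of_real (fst (L!q) * real n / real ((4::nat)^n)) * (s * s))
        * (snd (L!q) a * cnj (snd (L!q) a'))
        * (phase n t a * cnj (phase n t a') * cnj (phase n t b) * phase n t b')"
    unfolding twirl_weight_def by (simp only: sum.case prod.case mult_ac)
  thus ?thesis unfolding scale .
qed

lemma twirl_entry:
  assumes ab: "a < n" "a' < n" "b < n" "b' < n"
  shows "(\<Sum>y\<in>{..<length L} \<times> {..<4^n}. complex_of_real (twirl_weight n L c (Inl y)) *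
           kron (twirl_left n L (Inl y)) (twirl_right n (Inl y)) $$ (a*n+b, a'*n+b'))
     = (if (a = a' \<and> b = b') \<or> (a = b \<and> a' = b')
        then (\<Sum>q<length L. of_real (fst (L!q)) * snd (L!q) a * cnj (snd (L!q) a')) else 0)"
proof -
  define N where "N = (4::nat)^n"
  define cond where "cond = ((a = a' \<and> b = b') \<or> (a = b \<and> a' = b'))"
  have "(\<Sum>y\<in>{..<length L} \<times> {..<N}. complex_of_real (twirl_weight n L c (Inl y)) *
           kron (twirl_left n L (Inl y)) (twirl_right n (Inl y)) $$ (a*n+b, a'*n+b'))
      = (\<Sum>q<length L. of_real (fst (L!q) / real N) * (snd (L!q) a * cnj (snd (L!q) a'))
           * (\<Sum>t<N. phase n t a * cnj (phase n t a') * cnj (phase n t b) * phase n t b'))"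
    unfolding N_def by (simp add: sum_pairs twirl_summand[OF ab] sum_distrib_left)
  also have "\<dots> = (\<Sum>q<length L. if cond then of_real (fst (L!q)) * snd (L!q) a * cnj (snd (L!q) a') else 0)"
    unfolding N_def cond_def phase_average[OF ab] by (intro sum.cong refl) (auto simp: field_simps)
  also have "\<dots> = (if cond then (\<Sum>q<length L. of_real (fst (L!q)) * snd (L!q) a * cnj (snd (L!q) a'))
      else 0)" by (cases cond) simp_all
  finally show ?thesis unfolding N_def cond_def .
qed

lemma offdiag_entry:
  assumes ab: "a < n" "a' < n" "b < n" "b' < n"
  shows "(\<Sum>y\<in>{..<n} \<times> {..<n}. complex_of_real (twirl_weight n L c (Inr y)) *
           kron (twirl_left n L (Inr y)) (twirl_right n (Inr y)) $$ (a*n+b, a'*n+b'))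
     = (if a = a' \<and> b = b' \<and> a \<noteq> b then of_real c else 0)"
proof -
  have "(\<Sum>y\<in>{..<n} \<times> {..<n}. complex_of_real (twirl_weight n L c (Inr y)) *
           kron (twirl_left n L (Inr y)) (twirl_right n (Inr y)) $$ (a*n+b, a'*n+b'))
     = (\<Sum>i<n. \<Sum>k<n. if i = a \<and> k = b then (if a = a' \<and> b = b' \<and> a \<noteq> b then of_real c else 0) else 0)"
    unfolding sum_pairs using ab
    by (intro sum.cong refl) (auto simp: twirl_weight_def twirl_left_def twirl_right_def
        kron_idx[where n=n] proj_carrier proj_idx)
  also have "\<dots> = (if a = a' \<and> b = b' \<and> a \<noteq> b then of_real c else 0)"
    using ab(1,3) by (rule sum_delta2)
  finally show ?thesis .
qed

theorem twirl_separable: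
  assumes n: "n > 0"
    and unit: "\<And>q. q < length L \<Longrightarrow> (\<Sum>a<n. (cmod (snd (L!q) a))\<^sup>2) = 1"
    and lpos: "\<And>q. q < length L \<Longrightarrow> fst (L!q) \<ge> 0" and c: "c \<ge> 0"
    and trace: "real n * (\<Sum>q<length L. fst (L!q)) + real n * (real n - 1) * c = 1"
    and \<rho>: "\<rho> \<in> carrier_mat (n*n) (n*n)"
    and entries: "\<And>a b a' b'. a < n \<Longrightarrow> b < n \<Longrightarrow> a' < n \<Longrightarrow> b' < n \<Longrightarrow>
       \<rho> $$ (a*n+b, a'*n+b') =
         (if (a = a' \<and> b = b') \<or> (a = b \<and> a' = b')
          then (\<Sum>q<length L. of_real (fst (L!q)) * snd (L!q) a * cnj (snd (L!q) a')) else 0)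
         + (if a = a' \<and> b = b' \<and> a \<noteq> b then of_real c else 0)"
  shows "separable n \<rho>"
proof (rule separableI_finite)
  show "finite (twirl_index n L)" unfolding twirl_index_def by simp
  show "\<rho> = mat (n*n) (n*n) (\<lambda>(r,s). \<Sum>x\<in>twirl_index n L. complex_of_real (twirl_weight n L c x) *
      kron (twirl_left n L x) (twirl_right n x) $$ (r,s))"
  proof (rule mat_eq_idxI[OF \<rho>])
    fix a b a' b' assume ab: "a < n" "b < n" "a' < n" "b' < n"
    show "\<rho> $$ (a*n+b, a'*n+b') = mat (n*n) (n*n) (\<lambda>(r,s). \<Sum>x\<in>twirl_index n L.
        complex_of_real (twirl_weight n L c x) * kron (twirl_left n L x) (twirl_right n x) $$ (r,s))
        $$ (a*n+b, a'*n+b')"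
      using ab idx_lt[of a n b] idx_lt[of a' n b'] unfolding entries[OF ab] twirl_index_def
      by (subst sum.Plus) (auto simp: comp_def twirl_entry offdiag_entry)
  qed simp
qed (use twirl_states[OF n unit] twirl_weights_nonneg[OF lpos c] twirl_weights_sum trace in auto)


lemma W_tilde_twirl_form:
  fixes p :: real
  assumes n2: "n \<ge> 2" and ab: "a < n" "b < n" "a' < n" "b' < n"
  defines "d \<equiv> (1-p)/(real n)\<^sup>2" and "c \<equiv> p / (real n * (real n - 1))"
  shows "W_tilde n z p $$ (a*n+b, a'*n+b') =
     (if (a = a' \<and> b = b') \<or> (a = b \<and> a' = b') then Hmat n z d c $$ (a,a') else 0)
     + (if a = a' \<and> b = b' \<and> a \<noteq> b then of_real c else 0)"
  unfolding W_tilde_idx[OF n2 ab(1,3,2,4)] d_def[symmetric] c_def[symmetric]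
  using ab by (cases "a = a'"; cases "b = b'"; cases "a = b"; cases "a' = b'")
    (auto simp: Hmat_def Zmat_def)

lemma p_star:
  fixes lam :: real
  assumes "n > 0" "lam < 0" and p: "p = 1 / (1 + (real n)\<^sup>2 * \<bar>lam\<bar>)"
  shows "0 < p" "(1-p)/(real n)\<^sup>2 + p * lam = 0"
proof -
  have den: "1 + (real n)\<^sup>2 * \<bar>lam\<bar> > 0" by (simp add: add_pos_nonneg)
  thus "0 < p" unfolding p by simp
  hence "p * (1 + (real n)\<^sup>2 * \<bar>lam\<bar>) = 1" unfolding p by simp
  hence "1 - p = (real n)\<^sup>2 * (p * \<bar>lam\<bar>)" by (simp add: algebra_simps)
  hence "(1-p)/(real n)\<^sup>2 = p * \<bar>lam\<bar>" using assms(1) by simp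
  thus "(1-p)/(real n)\<^sup>2 + p * lam = 0" using assms(2) by simp
qed

lemma Hmat_spectral_data:
  fixes lam p d c :: real
  assumes n2: "n \<ge> 2"
    and herm: "\<And>i j. i < j \<Longrightarrow> j < n \<Longrightarrow> z j i = cnj (z i j)"
    and lam_min: "\<And>\<mu>. eigenvalue (W_mat n z) \<mu> \<Longrightarrow> lam \<le> Re \<mu>"
    and lam_neg: "lam < 0" and p_def: "p = 1 / (1 + (real n)\<^sup>2 * \<bar>lam\<bar>)"
    and d_def: "d = (1-p)/(real n)\<^sup>2" and c_def: "c = p / (real n * (real n - 1))"
  obtains L where "\<And>q. q < length L \<Longrightarrow> (\<Sum>a<n. (cmod (snd (L!q) a))\<^sup>2) = 1"
    and "\<And>q. q < length L \<Longrightarrow> fst (L!q) \<ge> 0"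
    and "\<forall>a<n. \<forall>b<n. Hmat n z d c $$ (a,b) =
           (\<Sum>q<length L. of_real (fst (L!q)) * snd (L!q) a * cnj (snd (L!q) b))"
    and "real n * (\<Sum>q<length L. fst (L!q)) + real n * (real n - 1) * c = 1"
    and "c \<ge> 0"
proof -
  have nn: "real n * (real n - 1) > 0" using n2 by simp
  have p: "0 < p" "d + p * lam = 0" using p_star[OF _ lam_neg p_def] n2 unfolding d_def by simp_all
  have c_pos: "c > 0" unfolding c_def by (rule divide_pos_pos[OF p(1) nn])
  have c_mult: "real n * (real n - 1) * c = p"
    unfolding c_def times_divide_eq_right
    using less_imp_neq[OF nn, symmetric] by (rule nonzero_mult_div_cancel_left)
  have "is_hermitian n (Hmat n z d c)" by (rule Hmat_hermitian[OF herm])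
  then obtain L where L: "eigensystem n (Hmat n z d c) L" and HL: "\<forall>a<n. \<forall>b<n. Hmat n z d c $$ (a,b) =
      (\<Sum>q<length L. of_real (fst (L!q)) * snd (L!q) a * cnj (snd (L!q) b))"
    using spectral_theorem by blast
  have eig_nonneg: "fst (L!q) \<ge> 0" if q: "q < length L" for q
  proof -
    obtain a0 where a0: "a0 < n" "snd (L!q) a0 \<noteq> 0" using eigensystem_nonzero[OF L q] .
    have "is_eigvec n (Hmat n z d c) (fst (L!q)) (snd (L!q))" using L q unfolding eigensystem_def by simp
    from Hmat_eigenvalue_lower_bound[OF n2 c_pos lam_min this a0]
    show ?thesis using p(2) c_mult by (simp add: mult.commute)
  qed
  have "of_real (\<Sum>q<length L. fst (L!q)) = complex_of_real (real n * d)"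
    unfolding spectral_trace[OF L HL] by (simp add: Hmat_def Zmat_def)
  moreover have "real n * (real n * d) = 1 - p" unfolding d_def using n2 by (simp add: power2_eq_square)
  ultimately have trace: "real n * (\<Sum>q<length L. fst (L!q)) + real n * (real n - 1) * c = 1"
    using c_mult by (simp only: of_real_eq_iff)
  show thesis by (rule that[OF eigensystem_unit[OF L] eig_nonneg HL trace less_imp_le[OF c_pos]])
qed

theorem mainTheorem6:
  fixes n :: nat and z :: "nat \<Rightarrow> nat \<Rightarrow> complex" and lam :: real
  assumes n2: "n \<ge> 2"
    and unimod: "\<And>i j. i < j \<Longrightarrow> j < n \<Longrightarrow> cmod (z i j) = 1"
    and herm: "\<And>i j. i < j \<Longrightarrow> j < n \<Longrightarrow> z j i = cnj (z i j)"
    and lam_eig: "eigenvalue (W_mat n z) (complex_of_real lam)"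
    and lam_min: "\<And>\<mu>. eigenvalue (W_mat n z) \<mu> \<Longrightarrow> lam \<le> Re \<mu>"
    and lam_neg: "lam < 0"
  shows "separable n (W_tilde n z (1 / (1 + (real n)^2 * \<bar>lam\<bar>)))"
proof -
  define p where "p = 1 / (1 + (real n)\<^sup>2 * \<bar>lam\<bar>)"
  define d where "d = (1-p)/(real n)\<^sup>2"
  define c where "c = p / (real n * (real n - 1))"
  obtain L where unit: "\<And>q. q < length L \<Longrightarrow> (\<Sum>a<n. (cmod (snd (L!q) a))\<^sup>2) = 1"
    and nonneg: "\<And>q. q < length L \<Longrightarrow> fst (L!q) \<ge> 0"
    and HL: "\<forall>a<n. \<forall>b<n. Hmat n z d c $$ (a,b) =
           (\<Sum>q<length L. of_real (fst (L!q)) * snd (L!q) a * cnj (snd (L!q) b))"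
    and trace: "real n * (\<Sum>q<length L. fst (L!q)) + real n * (real n - 1) * c = 1"
    and c: "c \<ge> 0"
    using Hmat_spectral_data[where z=z, OF n2 herm lam_min lam_neg p_def d_def c_def] by blast
  show ?thesis unfolding p_def[symmetric]
  proof (rule twirl_separable[OF _ unit nonneg c trace])
    fix a b a' b' assume "a < n" "b < n" "a' < n" "b' < n"
    with W_tilde_twirl_form[OF n2] HL show "W_tilde n z p $$ (a*n+b, a'*n+b') =
      (if (a = a' \<and> b = b') \<or> (a = b \<and> a' = b')
       then (\<Sum>q<length L. of_real (fst (L!q)) * snd (L!q) a * cnj (snd (L!q) a')) else 0)
      + (if a = a' \<and> b = b' \<and> a \<noteq> b then of_real c else 0)" by (simp add: d_def c_def)
  qed (use n2 in \<open>auto simp: W_tilde_def kron_def W_mat_def\<close>)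
qed

end
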